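(* 1. $\sup_{0\le x_1<\ell_\varepsilon}|\mu_\varepsilon(x_1)-\mu_0(x_1)|\to0$ as $\varepsilon\to0^+$. 2. There exist $\varepsilon_0>0$ and positive constants $C_1,C_2,C_3$ depending only on $\alpha,\kappa,\delta$ such that for every $0\le\varepsilon\le\varepsilon_0$ and every $x_1\in[0,\ell_\varepsilon)$: $$|\mu_\varepsilon(x_1)|\le C_1(1+x_1)^{-1/\alpha},\qquad |H_\varepsilon(\mu_\varepsilon(x_1))|\le C_2(1+x_1)^{-1-1/\alpha},\qquad |H_0'(\mu_\varepsilon(x_1))|\le C_3(1+x_1)^{-1}.$$
   Context: Fix $\kappa>0$, $\alpha>0$, $\delta<0$. For $\varepsilon\ge0$ let $H_\varepsilon(s)=\kappa|s|^{1+\alpha}+\varepsilon$, $\rho_\varepsilon(\xi_1)=\int_\delta^{\xi_1}ds/H_\varepsilon(s)$ for $\delta\le\xi_1<0$, $\ell_\varepsilon=\lim_{\xi_1\to0^-}\rho_\varepsilon(\xi_1)$ (finite for $\varepsilon>0$, $\ell_0=+\infty$), and $\mu_\varepsilon:=\rho_\varepsilon^{-1}:[0,\ell_\varepsilon)\to[\delta,0)$. Explicitly $\mu_0(x_1)=-(\alpha\kappa)^{-1/\alpha}(x_1+\hat x_1)^{-1/\alpha}$ with $\hat x_1=(\alpha\kappa)^{-1}|\delta|^{-\alpha}$. *)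

theory Defs
  imports "HOL-Analysis.Analysis"
begin

definition Hfun :: "real \<Rightarrow> real \<Rightarrow> real \<Rightarrow> real \<Rightarrow> real" where
  "Hfun \<kappa> \<alpha> \<epsilon> s = \<kappa> * \<bar>s\<bar> powr (1 + \<alpha>) + \<epsilon>"

definition rho :: "real \<Rightarrow> real \<Rightarrow> real \<Rightarrow> real \<Rightarrow> real \<Rightarrow> real" where
  "rho \<kappa> \<alpha> \<delta> \<epsilon> \<xi> = integral {\<delta>..\<xi>} (\<lambda>s. 1 / Hfun \<kappa> \<alpha> \<epsilon> s)"

text \<open>ell_eps = lim_{xi -> 0^-} rho_eps(xi), as an extended real (equal to +infinity for eps = 0)\<close>
definition ell :: "real \<Rightarrow> real \<Rightarrow> real \<Rightarrow> real \<Rightarrow> ereal" where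
  "ell \<kappa> \<alpha> \<delta> \<epsilon> = Lim (at_left 0) (\<lambda>\<xi>. ereal (rho \<kappa> \<alpha> \<delta> \<epsilon> \<xi>))"

definition mu :: "real \<Rightarrow> real \<Rightarrow> real \<Rightarrow> real \<Rightarrow> real \<Rightarrow> real" where
  "mu \<kappa> \<alpha> \<delta> \<epsilon> x = the_inv_into {\<delta>..<0} (rho \<kappa> \<alpha> \<delta> \<epsilon>) x"

end

theory Submission
  imports Defs
begin

text \<open>For \<open>\<epsilon> = 0\<close> the function \<open>1 / H\<^sub>0\<close> has the explicit primitive
  \<open>(-s) powr (-\<alpha>) / (\<alpha> \<kappa>)\<close> on \<open>s < 0\<close>, which gives \<open>\<rho>\<^sub>0\<close> and \<open>\<mu>\<^sub>0\<close> in closed form.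
  Since \<open>H\<^sub>\<epsilon> \<ge> H\<^sub>0\<close> we have \<open>\<rho>\<^sub>\<epsilon> \<le> \<rho>\<^sub>0\<close>, hence \<open>\<mu>\<^sub>0 \<le> \<mu>\<^sub>\<epsilon> < 0\<close>: the decay of \<open>\<mu>\<^sub>\<epsilon>\<close> and
  \<open>H\<^sub>0'(\<mu>\<^sub>\<epsilon>)\<close> is inherited from \<open>\<mu>\<^sub>0\<close>. For \<open>H\<^sub>\<epsilon>(\<mu>\<^sub>\<epsilon>)\<close> one also needs
  \<open>\<epsilon> \<lesssim> (1 + x)^(-1-1/\<alpha>)\<close> on \<open>[0, \<ell>\<^sub>\<epsilon>)\<close>, which follows from \<open>\<ell>\<^sub>\<epsilon> = O(\<epsilon>^(-\<alpha>/(1+\<alpha>)))\<close>,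
  obtained by splitting the integral at \<open>-\<epsilon>^(1/(1+\<alpha>))\<close>.
  For the uniform convergence, \<open>\<rho>\<^sub>0 - \<rho>\<^sub>\<epsilon> = O(\<epsilon>)\<close> on \<open>[\<delta>, -\<eta>]\<close> while \<open>\<rho>\<^sub>\<epsilon>\<close> grows at a rate
  bounded below uniformly in \<open>\<epsilon> \<le> 1\<close>; so \<open>\<mu>\<^sub>\<epsilon>\<close> lies within \<open>\<eta>\<close> of \<open>\<mu>\<^sub>0\<close> where \<open>\<mu>\<^sub>0 < -2\<eta>\<close>,
  and within \<open>2\<eta>\<close> anyway where \<open>\<mu>\<^sub>0 \<ge> -2\<eta>\<close>.\<close>

lemma abs_SUP_abs_less:
  fixes f :: "'a \<Rightarrow> real"
  assumes "S \<noteq> {}" "\<And>x. x \<in> S \<Longrightarrow> \<bar>f x\<bar> \<le> c" "c < r"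
  shows "\<bar>SUP x\<in>S. \<bar>f x\<bar>\<bar> < r"
proof -
  obtain x0 where x0: "x0 \<in> S" using assms(1) by blast
  have bdd: "bdd_above ((\<lambda>x. \<bar>f x\<bar>) ` S)" using assms(2) by (intro bdd_aboveI2)
  have "0 \<le> \<bar>f x0\<bar>" by simp
  also have "\<dots> \<le> (SUP x\<in>S. \<bar>f x\<bar>)" by (rule cSUP_upper[OF x0 bdd])
  finally have "0 \<le> (SUP x\<in>S. \<bar>f x\<bar>)" .
  moreover have "(SUP x\<in>S. \<bar>f x\<bar>) \<le> c" using assms(1,2) by (rule cSUP_least)
  ultimately show ?thesis using assms(3) by simp
qed

lemma le_decay_of_le_neg_powr:
  fixes a B e x :: real
  assumes "a > 0" "B > 0" "0 < e" "e \<le> 1" "0 \<le> x" "x \<le> B * e powr (-a / (1 + a))"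
  shows "e \<le> (1 + B) powr (1 + 1 / a) * (1 + x) powr (-1 - 1 / a)"
proof -
  define p where "p = e powr (-a / (1 + a))"
  have p_ge: "1 \<le> p"
    unfolding p_def using assms by (simp add: ge_one_powr_ge_zero powr_minus_divide powr_le1 le_divide_eq)
  have "1 + x \<le> (1 + B) * p" using assms p_ge unfolding p_def[symmetric] by (simp add: algebra_simps)
  then have "((1 + B) * p) powr (-1 - 1 / a) \<le> (1 + x) powr (-1 - 1 / a)"
    by (intro powr_mono2') (use assms in \<open>auto simp: field_simps\<close>)
  moreover have "(-a / (1 + a)) * (-1 - 1 / a) = 1"
  proof -
    have "-1 - 1 / a = -(1 + a) / a" "(-1 - a) / (1 + a) = -1"
      using assms by (simp_all add: field_simps divide_eq_eq)
    then show ?thesis using assms by simp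
  qed
  then have "p powr (-1 - 1 / a) = e"
    unfolding p_def using assms by (simp add: powr_powr)
  ultimately have "(1 + B) powr (1 + 1 / a) * ((1 + B) powr (-1 - 1 / a) * e)
      \<le> (1 + B) powr (1 + 1 / a) * (1 + x) powr (-1 - 1 / a)"
    using assms p_ge by (simp add: powr_mult mult_left_mono)
  moreover have "(1 + B) powr (1 + 1 / a) * (1 + B) powr (-1 - 1 / a) = 1"
    using assms by (simp add: powr_add[symmetric])
  ultimately show ?thesis by (simp add: mult.assoc[symmetric])
qed

locale power_hamiltonian =
  fixes \<kappa> \<alpha> \<delta> :: real
  assumes kappa_pos: "\<kappa> > 0" and alpha_pos: "\<alpha> > 0" and delta_neg: "\<delta> < 0"
begin

abbreviation "H e \<equiv> Hfun \<kappa> \<alpha> e"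
abbreviation "\<rho> e \<equiv> rho \<kappa> \<alpha> \<delta> e"
abbreviation "\<mu> e \<equiv> mu \<kappa> \<alpha> \<delta> e"
abbreviation "L e \<equiv> ell \<kappa> \<alpha> \<delta> e"

lemma continuous_on_Hfun: "continuous_on S (H e)"
proof -
  have "continuous_on S (\<lambda>s. \<bar>s\<bar> powr (1 + \<alpha>))"
    by (rule continuous_on_powr') (use alpha_pos in \<open>auto intro!: continuous_intros\<close>)
  then show ?thesis
    unfolding Hfun_def by (intro continuous_on_add continuous_on_mult continuous_on_const)
qed

lemma Hfun_pos: "e \<ge> 0 \<Longrightarrow> s \<noteq> 0 \<or> e > 0 \<Longrightarrow> H e s > 0"
proof -
  assume e: "e \<ge> 0" "s \<noteq> 0 \<or> e > 0"
  have "\<kappa> * \<bar>s\<bar> powr (1 + \<alpha>) \<ge> 0" "s \<noteq> 0 \<Longrightarrow> \<kappa> * \<bar>s\<bar> powr (1 + \<alpha>) > 0"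
    using kappa_pos by simp_all
  then show ?thesis unfolding Hfun_def using e by linarith
qed

lemma Hfun_mono_eps: "e \<ge> 0 \<Longrightarrow> H 0 s \<le> H e s"
  unfolding Hfun_def by simp

lemma Hfun_le_Hfun_one: "e \<le> 1 \<Longrightarrow> H e s \<le> H 1 s"
  unfolding Hfun_def by simp

lemma Hfun_le_at_delta: "\<delta> \<le> s \<Longrightarrow> s \<le> 0 \<Longrightarrow> H e s \<le> H e \<delta>"
proof -
  assume s: "\<delta> \<le> s" "s \<le> 0"
  have "\<bar>s\<bar> powr (1 + \<alpha>) \<le> \<bar>\<delta>\<bar> powr (1 + \<alpha>)"
    by (rule powr_mono2) (use alpha_pos s in auto)
  then show ?thesis unfolding Hfun_def using kappa_pos by simp
qed

lemma integrable_inverse_Hfun: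
  assumes "e \<ge> 0" "b < 0 \<or> e > 0"
  shows "(\<lambda>s. 1 / H e s) integrable_on {a..b}"
proof (rule integrable_continuous_interval)
  have "H e s \<noteq> 0" if "s \<in> {a..b}" for s
    using Hfun_pos[of e s] assms that by fastforce
  then show "continuous_on {a..b} (\<lambda>s. 1 / H e s)"
    by (intro continuous_intros continuous_on_Hfun) auto
qed

lemma deriv_Hfun_zero: "s < 0 \<Longrightarrow> deriv (H 0) s = - (\<kappa> * (1 + \<alpha>) * (-s) powr \<alpha>)"
proof -
  assume s: "s < 0"
  have "((\<lambda>s. \<kappa> * (-s) powr (1 + \<alpha>)) has_real_derivative - (\<kappa> * (1 + \<alpha>) * (-s) powr \<alpha>)) (at s)"
    using s by (auto intro!: derivative_eq_intros)
  then have "(H 0 has_real_derivative - (\<kappa> * (1 + \<alpha>) * (-s) powr \<alpha>)) (at s)"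
    by (rule has_field_derivative_transform_within_open[of _ _ _ "{..<0}"])
       (use s in \<open>auto simp: Hfun_def\<close>)
  then show ?thesis by (rule DERIV_imp_deriv)
qed

lemma rho_delta: "\<rho> e \<delta> = 0"
  unfolding rho_def by simp

lemma rho_split:
  assumes "e \<ge> 0" "b < 0 \<or> e > 0" "\<delta> \<le> x" "x \<le> b"
  shows "\<rho> e b = \<rho> e x + integral {x..b} (\<lambda>s. 1 / H e s)"
  unfolding rho_def
  using Henstock_Kurzweil_Integration.integral_combine[OF assms(3,4) integrable_inverse_Hfun[OF assms(1,2)]]
  by simp

lemma integral_inverse_Hfun_ge:
  assumes "e \<ge> 0" "b < 0 \<or> e > 0" "\<delta> \<le> x" "x \<le> b" "b \<le> 0"
  shows "(b - x) / H e \<delta> \<le> integral {x..b} (\<lambda>s. 1 / H e s)"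
proof -
  have "integral {x..b} (\<lambda>s. 1 / H e \<delta>) \<le> integral {x..b} (\<lambda>s. 1 / H e s)"
  proof (rule integral_le[OF integrable_const_ivl integrable_inverse_Hfun[OF assms(1,2)]])
    fix s assume s: "s \<in> {x..b}"
    then have "0 < H e s" using Hfun_pos assms by auto
    moreover have "H e s \<le> H e \<delta>" using Hfun_le_at_delta assms s by auto
    ultimately show "1 / H e \<delta> \<le> 1 / H e s" by (simp add: frac_le)
  qed
  then show ?thesis using assms by (simp add: content_real)
qed

lemma rho_strict_mono:
  assumes "e \<ge> 0" "y < 0 \<or> e > 0" "\<delta> \<le> x" "x < y" "y \<le> 0"
  shows "\<rho> e x < \<rho> e y"
proof -
  have "0 < (y - x) / H e \<delta>" using Hfun_pos[of e \<delta>] assms delta_neg by simp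
  also have "\<dots> \<le> integral {x..y} (\<lambda>s. 1 / H e s)"
    using integral_inverse_Hfun_ge[of e y x] assms by auto
  finally show ?thesis using rho_split[of e y x] assms by auto
qed

lemma inj_on_rho: "e \<ge> 0 \<Longrightarrow> inj_on (\<rho> e) {\<delta>..<0}"
  by (rule inj_onI, rule ccontr) (auto dest: rho_strict_mono[of e] simp: neq_iff)

lemma continuous_on_rho: "e \<ge> 0 \<Longrightarrow> b < 0 \<or> e > 0 \<Longrightarrow> continuous_on {\<delta>..b} (\<rho> e)"
  unfolding rho_def by (rule indefinite_integral_continuous_1[OF integrable_inverse_Hfun])

lemma rho_le_rho_zero: "e \<ge> 0 \<Longrightarrow> \<delta> \<le> x \<Longrightarrow> x < 0 \<Longrightarrow> \<rho> e x \<le> \<rho> 0 x"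
  unfolding rho_def
proof (rule integral_le[OF integrable_inverse_Hfun integrable_inverse_Hfun])
  fix s assume "e \<ge> 0" "x < 0" "s \<in> {\<delta>..x}"
  then show "1 / H e s \<le> 1 / H 0 s"
    using Hfun_pos[of 0 s] Hfun_mono_eps[of e s] by (simp add: frac_le)
qed auto

text \<open>On \<open>[\<delta>, -\<eta>]\<close> both Hamiltonians are at least \<open>q = \<kappa> \<eta>^(1+\<alpha>)\<close> and
  \<open>1/H\<^sub>0 - 1/H\<^sub>\<epsilon> = \<epsilon> / (H\<^sub>0 H\<^sub>\<epsilon>) \<le> \<epsilon> / q\<^sup>2\<close>.\<close>
lemma rho_zero_minus_rho_le:
  assumes "0 < \<eta>" "0 \<le> e" "\<delta> \<le> y" "y \<le> -\<eta>"
  shows "\<rho> 0 y - \<rho> e y \<le> e * (-\<delta>) / (\<kappa> * \<eta> powr (1 + \<alpha>))\<^sup>2"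
proof -
  define q where "q = \<kappa> * \<eta> powr (1 + \<alpha>)"
  have q_pos: "q > 0" unfolding q_def using kappa_pos assms by simp
  have int0: "(\<lambda>s. 1 / H 0 s) integrable_on {\<delta>..y}"
   and inte: "(\<lambda>s. 1 / H e s) integrable_on {\<delta>..y}"
    using integrable_inverse_Hfun assms by auto
  have "\<rho> 0 y - \<rho> e y = integral {\<delta>..y} (\<lambda>s. 1 / H 0 s - 1 / H e s)"
    unfolding rho_def using integral_diff[OF int0 inte] by simp
  also have "\<dots> \<le> integral {\<delta>..y} (\<lambda>s. e / q\<^sup>2)"
  proof (rule integral_le[OF integrable_diff[OF int0 inte] integrable_const_ivl])
    fix s assume s: "s \<in> {\<delta>..y}"
    have "\<eta> powr (1 + \<alpha>) \<le> \<bar>s\<bar> powr (1 + \<alpha>)"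
      by (rule powr_mono2) (use alpha_pos assms s in auto)
    then have q_le: "q \<le> H 0 s" unfolding q_def Hfun_def using kappa_pos by simp
    have He: "H e s = H 0 s + e" unfolding Hfun_def by simp
    have "1 / H 0 s - 1 / H e s = e / (H 0 s * H e s)"
      using q_pos q_le assms unfolding He by (simp add: field_simps)
    also have "\<dots> \<le> e / q\<^sup>2"
      unfolding power2_eq_square He
      by (rule divide_left_mono) (use q_pos q_le assms in \<open>auto intro!: mult_mono mult_pos_pos\<close>)
    finally show "1 / H 0 s - 1 / H e s \<le> e / q\<^sup>2" .
  qed
  also have "\<dots> = (y - \<delta>) * (e / q\<^sup>2)"
    using assms by (simp add: content_real)
  also have "\<dots> \<le> (-\<delta>) * (e / q\<^sup>2)"
    by (rule mult_right_mono) (use assms q_pos in auto)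
  finally show ?thesis unfolding q_def by (simp add: mult.commute)
qed

subsection \<open>The case \<open>\<epsilon> = 0\<close>\<close>

definition prim0 :: "real \<Rightarrow> real" where
  "prim0 s = (-s) powr (-\<alpha>) / (\<alpha> * \<kappa>)"

lemma prim0_has_derivative: "s < 0 \<Longrightarrow> (prim0 has_real_derivative 1 / H 0 s) (at s)"
proof -
  assume s: "s < 0"
  have exp: "-\<alpha> - 1 = -(1 + \<alpha>)" by simp
  have "(prim0 has_real_derivative (-\<alpha>) * (-s) powr (-\<alpha> - 1) * (-1) / (\<alpha> * \<kappa>)) (at s)"
    unfolding prim0_def using s alpha_pos kappa_pos by (auto intro!: derivative_eq_intros)
  moreover have "(-\<alpha>) * (-s) powr (-\<alpha> - 1) * (-1) / (\<alpha> * \<kappa>) = (-s) powr (-(1 + \<alpha>)) / \<kappa>"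
    unfolding exp using alpha_pos kappa_pos
    by (simp add: field_simps)
  moreover have "(-s) powr (-(1 + \<alpha>)) / \<kappa> = 1 / H 0 s"
    unfolding Hfun_def powr_minus_divide using s by simp
  ultimately show ?thesis by simp
qed

lemma rho_zero_eq: "\<delta> \<le> x \<Longrightarrow> x < 0 \<Longrightarrow> \<rho> 0 x = prim0 x - prim0 \<delta>"
  unfolding rho_def
proof (intro integral_unique fundamental_theorem_of_calculus)
  fix s assume "x < 0" "s \<in> {\<delta>..x}"
  then have "(prim0 has_real_derivative 1 / H 0 s) (at s)"
    by (intro prim0_has_derivative) simp
  then show "(prim0 has_vector_derivative 1 / H 0 s) (at s within {\<delta>..x})"
    by (simp add: has_real_derivative_iff_has_vector_derivative has_vector_derivative_at_within)
qed

text \<open>This is \<open>\<mu>\<^sub>0(x) = -(\<alpha>\<kappa>)^(-1/\<alpha>) (x + x\<^sub>0)^(-1/\<alpha>)\<close> with \<open>x\<^sub>0 = (\<alpha>\<kappa>)\<inverse> |\<delta>|^(-\<alpha>)\<close>.\<close>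
definition mu0 :: "real \<Rightarrow> real" where
  "mu0 x = - ((\<alpha> * \<kappa> * x + (-\<delta>) powr (-\<alpha>)) powr (-1 / \<alpha>))"

lemma mu0_solves:
  assumes "0 \<le> x"
  shows "\<delta> \<le> mu0 x" "mu0 x < 0" "\<rho> 0 (mu0 x) = x"
proof -
  define c where "c = \<alpha> * \<kappa> * x + (-\<delta>) powr (-\<alpha>)"
  have c_ge: "c \<ge> (-\<delta>) powr (-\<alpha>)" unfolding c_def using alpha_pos kappa_pos assms by simp
  moreover have "(-\<delta>) powr (-\<alpha>) > 0" using delta_neg by simp
  ultimately have c_pos: "c > 0" by linarith
  have mu0_c: "mu0 x = - (c powr (-1 / \<alpha>))" unfolding mu0_def c_def by simp
  then show neg: "mu0 x < 0" using c_pos by simp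
  have "c powr (-1 / \<alpha>) \<le> ((-\<delta>) powr (-\<alpha>)) powr (-1 / \<alpha>)"
    by (rule powr_mono2') (use alpha_pos delta_neg c_ge in auto)
  also have "\<dots> = -\<delta>" using alpha_pos delta_neg by (simp add: powr_powr)
  finally show ge: "\<delta> \<le> mu0 x" using mu0_c by simp
  have "prim0 (mu0 x) = c / (\<alpha> * \<kappa>)"
    unfolding prim0_def mu0_c using alpha_pos c_pos by (simp add: powr_powr)
  also have "\<dots> = x + prim0 \<delta>"
    unfolding c_def prim0_def using alpha_pos kappa_pos by (simp add: field_simps)
  finally show "\<rho> 0 (mu0 x) = x" using rho_zero_eq[OF ge neg] by simp
qed

definition mu_decay_const :: real where
  "mu_decay_const = (min (\<alpha> * \<kappa>) ((-\<delta>) powr (-\<alpha>))) powr (-1 / \<alpha>)"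

lemma mu_decay_const_pos: "mu_decay_const > 0"
proof -
  have "min (\<alpha> * \<kappa>) ((-\<delta>) powr (-\<alpha>)) > 0" using alpha_pos kappa_pos delta_neg by simp
  then have "min (\<alpha> * \<kappa>) ((-\<delta>) powr (-\<alpha>)) \<noteq> 0" by linarith
  then show ?thesis unfolding mu_decay_const_def powr_gt_zero .
qed

lemma minus_mu0_le: "0 \<le> x \<Longrightarrow> - mu0 x \<le> mu_decay_const * (1 + x) powr (-1 / \<alpha>)"
proof -
  assume x: "0 \<le> x"
  define m where "m = min (\<alpha> * \<kappa>) ((-\<delta>) powr (-\<alpha>))"
  have m_pos: "m > 0" unfolding m_def using alpha_pos kappa_pos delta_neg by simp
  have "m * (1 + x) \<le> (-\<delta>) powr (-\<alpha>) + \<alpha> * \<kappa> * x"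
    unfolding distrib_left by (intro add_mono mult_right_mono) (use x in \<open>auto simp: m_def\<close>)
  then have "(\<alpha> * \<kappa> * x + (-\<delta>) powr (-\<alpha>)) powr (-1 / \<alpha>) \<le> (m * (1 + x)) powr (-1 / \<alpha>)"
    by (intro powr_mono2') (use alpha_pos m_pos x in auto)
  then show ?thesis
    unfolding mu0_def mu_decay_const_def m_def[symmetric] using m_pos x by (simp add: powr_mult)
qed

subsection \<open>The limit \<open>\<ell>\<^sub>\<epsilon>\<close> and the inverse \<open>\<mu>\<^sub>\<epsilon>\<close>\<close>

lemma ell_eq_rho_zero: "e > 0 \<Longrightarrow> L e = ereal (\<rho> e 0)"
proof -
  assume e: "e > 0"
  have "(\<rho> e \<longlongrightarrow> \<rho> e 0) (at 0 within {\<delta>..0})"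
    using continuous_on_rho[of e 0] e delta_neg by (simp add: continuous_on_def)
  then have "(\<rho> e \<longlongrightarrow> \<rho> e 0) (at_left 0)"
    using at_within_Icc_at_left[of \<delta> 0] delta_neg by simp
  then show ?thesis unfolding ell_def by (intro tendsto_Lim) auto
qed

lemma ell_pos: "e > 0 \<Longrightarrow> ereal 0 < L e"
  using rho_strict_mono[of e 0 \<delta>] ell_eq_rho_zero rho_delta delta_neg by simp

lemma rho_surj:
  assumes "e \<ge> 0" "0 \<le> x" "ereal x < L e"
  shows "\<exists>\<xi>. \<delta> \<le> \<xi> \<and> \<xi> < 0 \<and> \<rho> e \<xi> = x"
proof (cases "e = 0")
  case True
  then show ?thesis using mu0_solves[OF assms(2)] by blast
next
  case False
  then have e: "e > 0" using assms by simp
  then have x_less: "x < \<rho> e 0" using ell_eq_rho_zero assms by simp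
  obtain \<xi> where "\<delta> \<le> \<xi>" "\<xi> \<le> 0" "\<rho> e \<xi> = x"
    using IVT'[of "\<rho> e" \<delta> x 0] rho_delta assms x_less delta_neg continuous_on_rho[of e 0] e
    by auto
  moreover have "\<xi> \<noteq> 0" using x_less calculation by auto
  ultimately show ?thesis by auto
qed

lemma mu_solves:
  assumes "e \<ge> 0" "0 \<le> x" "ereal x < L e"
  shows "\<delta> \<le> \<mu> e x" "\<mu> e x < 0" "\<rho> e (\<mu> e x) = x"
proof -
  have "x \<in> \<rho> e ` {\<delta>..<0}" using rho_surj[OF assms] by auto
  then show "\<delta> \<le> \<mu> e x" "\<mu> e x < 0" "\<rho> e (\<mu> e x) = x"
    unfolding mu_def using f_the_inv_into_f[OF inj_on_rho[OF assms(1)]]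
      the_inv_into_into[OF inj_on_rho[OF assms(1)], of x "{\<delta>..<0}"]
    by auto
qed

lemma mu_zero_eq: "0 \<le> x \<Longrightarrow> \<mu> 0 x = mu0 x"
  unfolding mu_def using mu0_solves[of x] the_inv_into_f_f[OF inj_on_rho[of 0], of "mu0 x"] by auto

lemma mu_less_of_less_rho:
  assumes "e \<ge> 0" "0 \<le> x" "ereal x < L e" "\<delta> \<le> \<xi>" "\<xi> < 0" "x < \<rho> e \<xi>"
  shows "\<mu> e x < \<xi>"
proof (rule ccontr)
  assume "\<not> \<mu> e x < \<xi>"
  then have "\<rho> e \<xi> \<le> \<rho> e (\<mu> e x)"
    using rho_strict_mono[of e "\<mu> e x" \<xi>] mu_solves[OF assms(1-3)] assms
    by (cases "\<xi> = \<mu> e x") auto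
  then show False using mu_solves[OF assms(1-3)] assms by simp
qed

lemma mu0_le_mu:
  assumes "e \<ge> 0" "0 \<le> x" "ereal x < L e"
  shows "mu0 x \<le> \<mu> e x"
proof (rule ccontr)
  assume "\<not> mu0 x \<le> \<mu> e x"
  then have "\<rho> e (\<mu> e x) < \<rho> e (mu0 x)"
    using rho_strict_mono[OF assms(1), of "mu0 x" "\<mu> e x"] mu_solves[OF assms]
      mu0_solves[OF assms(2)] by auto
  also have "\<dots> \<le> \<rho> 0 (mu0 x)"
    using rho_le_rho_zero[OF assms(1), of "mu0 x"] mu0_solves[OF assms(2)] by simp
  finally show False using mu_solves[OF assms] mu0_solves[OF assms(2)] by simp
qed

subsection \<open>Decay bounds\<close>

text \<open>Split at \<open>-t\<close>, \<open>t = e^(1/(1+\<alpha>))\<close>: left of \<open>-t\<close> use \<open>\<rho>\<^sub>e \<le> \<rho>\<^sub>0 \<le> prim0\<close>, right of it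
  use \<open>H\<^sub>e \<ge> e\<close>; both pieces are \<open>O(e^(-\<alpha>/(1+\<alpha>)))\<close>.\<close>
lemma rho_at_zero_le:
  assumes e: "0 < e" "e \<le> (-\<delta>) powr (1 + \<alpha>)"
  shows "\<rho> e 0 \<le> (1 + 1 / (\<alpha> * \<kappa>)) * e powr (-\<alpha> / (1 + \<alpha>))"
proof -
  define t where "t = e powr (1 / (1 + \<alpha>))"
  have t_pos: "t > 0" unfolding t_def using e by simp
  have "t \<le> ((-\<delta>) powr (1 + \<alpha>)) powr (1 / (1 + \<alpha>))"
    unfolding t_def by (rule powr_mono2) (use e alpha_pos in auto)
  also have "\<dots> = -\<delta>" using alpha_pos delta_neg by (simp add: powr_powr)
  finally have t_le: "\<delta> \<le> -t" by simp
  have "\<rho> e (-t) \<le> prim0 (-t) - prim0 \<delta>"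
    using rho_le_rho_zero[of e "-t"] rho_zero_eq e t_le t_pos by simp
  also have "\<dots> \<le> prim0 (-t)" unfolding prim0_def using alpha_pos kappa_pos by simp
  also have "\<dots> = e powr (-\<alpha> / (1 + \<alpha>)) / (\<alpha> * \<kappa>)"
    unfolding prim0_def t_def using e by (simp add: powr_powr)
  finally have left: "\<rho> e (-t) \<le> e powr (-\<alpha> / (1 + \<alpha>)) / (\<alpha> * \<kappa>)" .
  have "integral {-t..0} (\<lambda>s. 1 / H e s) \<le> integral {-t..0} (\<lambda>s. 1 / e)"
  proof (rule integral_le[OF integrable_inverse_Hfun integrable_const_ivl])
    fix s
    have "e \<le> H e s" unfolding Hfun_def using kappa_pos by simp
    then show "1 / H e s \<le> 1 / e" using e by (simp add: frac_le)
  qed (use e in auto)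
  also have "\<dots> = e powr (1 / (1 + \<alpha>)) / e powr 1"
    using t_pos e by (simp add: content_real t_def)
  also have "\<dots> = e powr (-\<alpha> / (1 + \<alpha>))"
    unfolding powr_diff[symmetric] using alpha_pos by (simp add: field_simps)
  finally have right: "integral {-t..0} (\<lambda>s. 1 / H e s) \<le> e powr (-\<alpha> / (1 + \<alpha>))" .
  show ?thesis
    using rho_split[of e 0 "-t"] e t_le t_pos left right by (simp add: algebra_simps add_divide_distrib)
qed

lemma abs_mu_le:
  assumes "e \<ge> 0" "0 \<le> x" "ereal x < L e"
  shows "\<bar>\<mu> e x\<bar> \<le> mu_decay_const * (1 + x) powr (-1 / \<alpha>)"
  using minus_mu0_le[OF assms(2)] mu0_le_mu[OF assms] mu_solves[OF assms] by simp

lemma abs_mu_powr_le: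
  assumes "e \<ge> 0" "0 \<le> x" "ereal x < L e" "p > 0"
  shows "\<bar>\<mu> e x\<bar> powr p \<le> mu_decay_const powr p * (1 + x) powr (-p / \<alpha>)"
proof -
  have "\<bar>\<mu> e x\<bar> powr p \<le> (mu_decay_const * (1 + x) powr (-1 / \<alpha>)) powr p"
    by (rule powr_mono2) (use assms abs_mu_le in auto)
  also have "\<dots> = mu_decay_const powr p * (1 + x) powr (-p / \<alpha>)"
    using mu_decay_const_pos assms by (simp add: powr_mult powr_powr)
  finally show ?thesis .
qed

lemma abs_deriv_Hfun_mu_le:
  assumes "e \<ge> 0" "0 \<le> x" "ereal x < L e"
  shows "\<bar>deriv (H 0) (\<mu> e x)\<bar> \<le> \<kappa> * (1 + \<alpha>) * mu_decay_const powr \<alpha> * (1 + x) powr (-1)"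
proof -
  have "\<bar>deriv (H 0) (\<mu> e x)\<bar> = \<kappa> * (1 + \<alpha>) * \<bar>\<mu> e x\<bar> powr \<alpha>"
    using deriv_Hfun_zero mu_solves[OF assms] kappa_pos alpha_pos by simp
  also have "\<dots> \<le> \<kappa> * (1 + \<alpha>) * (mu_decay_const powr \<alpha> * (1 + x) powr (-\<alpha> / \<alpha>))"
    using abs_mu_powr_le[OF assms alpha_pos] kappa_pos alpha_pos by (intro mult_left_mono) auto
  finally show ?thesis using alpha_pos by simp
qed

definition Hfun_decay_const :: real where
  "Hfun_decay_const = \<kappa> * mu_decay_const powr (1 + \<alpha>) + (2 + 1 / (\<alpha> * \<kappa>)) powr (1 + 1 / \<alpha>)"

lemma Hfun_decay_const_pos: "Hfun_decay_const > 0"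
proof -
  have "2 + 1 / (\<alpha> * \<kappa>) > 0" using alpha_pos kappa_pos by (simp add: add_pos_pos)
  then show ?thesis unfolding Hfun_decay_const_def using kappa_pos mu_decay_const_pos
    by (simp add: add_pos_pos)
qed

lemma abs_Hfun_mu_le:
  assumes "0 \<le> e" "e \<le> 1" "e \<le> (-\<delta>) powr (1 + \<alpha>)" "0 \<le> x" "ereal x < L e"
  shows "\<bar>H e (\<mu> e x)\<bar> \<le> Hfun_decay_const * (1 + x) powr (-1 - 1 / \<alpha>)"
proof -
  have exp: "-(1 + \<alpha>) / \<alpha> = -1 - 1 / \<alpha>" using alpha_pos by (simp add: field_simps)
  have e_le: "e \<le> (2 + 1 / (\<alpha> * \<kappa>)) powr (1 + 1 / \<alpha>) * (1 + x) powr (-1 - 1 / \<alpha>)"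
  proof (cases "e = 0")
    case False
    then have "x \<le> (1 + 1 / (\<alpha> * \<kappa>)) * e powr (-\<alpha> / (1 + \<alpha>))"
      using rho_at_zero_le[of e] ell_eq_rho_zero[of e] assms by fastforce
    moreover have "1 + 1 / (\<alpha> * \<kappa>) > 0" using alpha_pos kappa_pos by (simp add: add_pos_pos)
    ultimately show ?thesis
      using le_decay_of_le_neg_powr[OF alpha_pos, of "1 + 1 / (\<alpha> * \<kappa>)" e x] assms False
      by (simp add: add.assoc)
  qed simp
  have "\<bar>H e (\<mu> e x)\<bar> = \<kappa> * \<bar>\<mu> e x\<bar> powr (1 + \<alpha>) + e"
    unfolding Hfun_def using kappa_pos assms by simp
  also have "\<dots> \<le> \<kappa> * (mu_decay_const powr (1 + \<alpha>) * (1 + x) powr (-1 - 1 / \<alpha>))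
      + (2 + 1 / (\<alpha> * \<kappa>)) powr (1 + 1 / \<alpha>) * (1 + x) powr (-1 - 1 / \<alpha>)"
    using abs_mu_powr_le[OF assms(1,4,5), of "1 + \<alpha>"] alpha_pos kappa_pos e_le
    unfolding exp by (intro add_mono mult_left_mono) auto
  finally show ?thesis unfolding Hfun_decay_const_def by (simp add: algebra_simps)
qed

subsection \<open>Uniform convergence\<close>

text \<open>\<open>1 / H\<^sub>1(\<delta>)\<close> bounds the slope of \<open>\<rho>\<^sub>e\<close> on \<open>[\<delta>, 0)\<close> from below for all \<open>e \<le> 1\<close>.\<close>
lemma mu_less_mu0_add:
  assumes "0 < \<eta>" "0 < e" "e \<le> 1" "e * (-\<delta>) / (\<kappa> * \<eta> powr (1 + \<alpha>))\<^sup>2 < \<eta> / H 1 \<delta>"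
    and x: "0 \<le> x" "ereal x < L e" "mu0 x < -2 * \<eta>"
  shows "\<mu> e x < mu0 x + \<eta>"
proof (rule mu_less_of_less_rho)
  note m0 = mu0_solves[OF x(1)]
  show "\<delta> \<le> mu0 x + \<eta>" "mu0 x + \<eta> < 0" using m0 assms by auto
  have "H e \<delta> \<le> H 1 \<delta>" using Hfun_le_Hfun_one assms by simp
  then have "\<eta> / H 1 \<delta> \<le> \<eta> / H e \<delta>"
    using Hfun_pos[of e \<delta>] assms delta_neg by (intro divide_left_mono) auto
  also have "\<dots> \<le> integral {mu0 x..mu0 x + \<eta>} (\<lambda>s. 1 / H e s)"
    using integral_inverse_Hfun_ge[of e "mu0 x + \<eta>" "mu0 x"] m0 assms by simp
  finally have "\<rho> e (mu0 x) + \<eta> / H 1 \<delta> \<le> \<rho> e (mu0 x + \<eta>)"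
    using rho_split[of e "mu0 x + \<eta>" "mu0 x"] m0 assms by simp
  moreover have "x - e * (-\<delta>) / (\<kappa> * \<eta> powr (1 + \<alpha>))\<^sup>2 \<le> \<rho> e (mu0 x)"
    using rho_zero_minus_rho_le[of \<eta> e "mu0 x"] m0 assms by simp
  ultimately show "x < \<rho> e (mu0 x + \<eta>)" using assms(4) by simp
qed (use assms in auto)

lemma eventually_mu_near_mu0:
  assumes "0 < \<eta>"
  shows "eventually (\<lambda>e. \<forall>x. 0 \<le> x \<and> ereal x < L e \<longrightarrow> \<bar>\<mu> e x - \<mu> 0 x\<bar> \<le> 2 * \<eta>) (at_right 0)"
proof -
  have "((\<lambda>e. e * (-\<delta>) / (\<kappa> * \<eta> powr (1 + \<alpha>))\<^sup>2) \<longlongrightarrow> 0 * (-\<delta>) / (\<kappa> * \<eta> powr (1 + \<alpha>))\<^sup>2) (at_right 0)"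
    using kappa_pos assms by (intro tendsto_intros) auto
  moreover have "\<eta> / H 1 \<delta> > 0" using Hfun_pos[of 1 \<delta>] assms by simp
  ultimately have small: "eventually (\<lambda>e. e * (-\<delta>) / (\<kappa> * \<eta> powr (1 + \<alpha>))\<^sup>2 < \<eta> / H 1 \<delta>) (at_right 0)"
    by (auto dest: order_tendstoD)
  show ?thesis
    using small eventually_at_right_real[OF zero_less_one]
  proof eventually_elim
    case (elim e)
    show ?case
    proof (intro allI impI)
      fix x assume x: "0 \<le> x \<and> ereal x < L e"
      have "mu0 x \<le> \<mu> e x" "\<mu> e x < 0" using mu0_le_mu mu_solves elim x by auto
      moreover have "mu0 x < -2 * \<eta> \<Longrightarrow> \<mu> e x < mu0 x + \<eta>"
        using mu_less_mu0_add[of \<eta> e x] assms elim x by auto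
      ultimately show "\<bar>\<mu> e x - \<mu> 0 x\<bar> \<le> 2 * \<eta>"
        using mu_zero_eq x assms by (cases "mu0 x < -2 * \<eta>") auto
    qed
  qed
qed

lemma sup_abs_mu_diff_tendsto_zero:
  "((\<lambda>e. SUP x \<in> {x. 0 \<le> x \<and> ereal x < L e}. \<bar>\<mu> e x - \<mu> 0 x\<bar>) \<longlongrightarrow> 0) (at_right 0)"
proof (rule tendstoI)
  fix r :: real assume "r > 0"
  then have "eventually (\<lambda>e. \<forall>x. 0 \<le> x \<and> ereal x < L e \<longrightarrow> \<bar>\<mu> e x - \<mu> 0 x\<bar> \<le> 2 * (r / 3)) (at_right 0)"
    by (intro eventually_mu_near_mu0) simp
  then show "eventually (\<lambda>e. dist (SUP x \<in> {x. 0 \<le> x \<and> ereal x < L e}. \<bar>\<mu> e x - \<mu> 0 x\<bar>) 0 < r) (at_right 0)"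
    using eventually_at_right_real[OF zero_less_one]
  proof eventually_elim
    case (elim e)
    then have "0 \<in> {x. 0 \<le> x \<and> ereal x < L e}" using ell_pos by simp
    then show ?case
      unfolding dist_real_def diff_zero using elim \<open>r > 0\<close> by (intro abs_SUP_abs_less[where c = "2 * (r / 3)"]) auto
  qed
qed

end

theorem lemma3p1:
  fixes \<kappa> \<alpha> \<delta> :: real
  assumes "\<kappa> > 0" and "\<alpha> > 0" and "\<delta> < 0"
  shows "((\<lambda>\<epsilon>. SUP x1 \<in> {x1. 0 \<le> x1 \<and> ereal x1 < ell \<kappa> \<alpha> \<delta> \<epsilon>}.
             \<bar>mu \<kappa> \<alpha> \<delta> \<epsilon> x1 - mu \<kappa> \<alpha> \<delta> 0 x1\<bar>) \<longlongrightarrow> 0) (at_right 0)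
    \<and> (\<exists>\<epsilon>0 > 0. \<exists>C1 > 0. \<exists>C2 > 0. \<exists>C3 > 0.
         \<forall>\<epsilon> x1. 0 \<le> \<epsilon> \<and> \<epsilon> \<le> \<epsilon>0 \<and> 0 \<le> x1 \<and> ereal x1 < ell \<kappa> \<alpha> \<delta> \<epsilon> \<longrightarrow>
           \<bar>mu \<kappa> \<alpha> \<delta> \<epsilon> x1\<bar> \<le> C1 * (1 + x1) powr (- 1 / \<alpha>) \<and>
           \<bar>Hfun \<kappa> \<alpha> \<epsilon> (mu \<kappa> \<alpha> \<delta> \<epsilon> x1)\<bar> \<le> C2 * (1 + x1) powr (- 1 - 1 / \<alpha>) \<and>
           \<bar>deriv (Hfun \<kappa> \<alpha> 0) (mu \<kappa> \<alpha> \<delta> \<epsilon> x1)\<bar> \<le> C3 * (1 + x1) powr (- 1))"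
proof -
  interpret power_hamiltonian \<kappa> \<alpha> \<delta> using assms by unfold_locales
  let ?\<epsilon>0 = "min 1 ((-\<delta>) powr (1 + \<alpha>))" and ?C3 = "\<kappa> * (1 + \<alpha>) * mu_decay_const powr \<alpha>"
  have "?\<epsilon>0 > 0" "?C3 > 0" using assms mu_decay_const_pos by simp_all
  moreover have "\<forall>\<epsilon> x1. 0 \<le> \<epsilon> \<and> \<epsilon> \<le> ?\<epsilon>0 \<and> 0 \<le> x1 \<and> ereal x1 < ell \<kappa> \<alpha> \<delta> \<epsilon> \<longrightarrow>
           \<bar>mu \<kappa> \<alpha> \<delta> \<epsilon> x1\<bar> \<le> mu_decay_const * (1 + x1) powr (- 1 / \<alpha>) \<and>
           \<bar>Hfun \<kappa> \<alpha> \<epsilon> (mu \<kappa> \<alpha> \<delta> \<epsilon> x1)\<bar> \<le> Hfun_decay_const * (1 + x1) powr (- 1 - 1 / \<alpha>) \<and>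
           \<bar>deriv (Hfun \<kappa> \<alpha> 0) (mu \<kappa> \<alpha> \<delta> \<epsilon> x1)\<bar> \<le> ?C3 * (1 + x1) powr (- 1)"
    using abs_mu_le abs_Hfun_mu_le abs_deriv_Hfun_mu_le by simp
  ultimately show ?thesis
    using sup_abs_mu_diff_tendsto_zero mu_decay_const_pos Hfun_decay_const_pos by blast
qed

end
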